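(* For every real $M\ge 0$ and positive integers $N$ and $K$, with $\mathcal{N}=\{1,\dots,N\}$, \[ R(M,N,K)\le 72\,\bar{R}(M,\mathcal{N},K). \]
   Context: Caching problem: a server holds $N$ files of $F$ bits each, connected through a shared error-free link to $K$ users each with a cache of $MF$ bits. In the placement phase each user stores an arbitrary function of the files of at most $MF$ bits; in the delivery phase each user requests a file, the server sends a message over the shared link, and each user must reconstruct its requested file from the message and its cache. The rate for a demand vector is message length divided by $F$. $\bar{R}(M,\mathcal{N},K)$ is the optimal expected rate (infimum over all schemes of the expected rate, achievable with vanishing error probability for all large $F$) when the $K$ demands are i.i.d. uniform over $\mathcal{N}$. The function $R$ is defined by $R(M,N,K)=(1-M/N)\min\{\tfrac{N}{M}(1-(1-M/N)^K),N\}$ for $M\in(0,N]$, $R(0,N,K)=\min\{N,K\}$, and $R(M,N,K)=0$ for $M>N$. *)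

theory Defs
  imports Main "HOL-Library.FuncSet" Complex_Main
begin

text \<open>The files are independent and uniformly distributed, i.e.
the file tuple is uniform over file_tuples Ns F.\<close>

definition file_tuples :: "nat set \<Rightarrow> nat \<Rightarrow> (nat \<Rightarrow> bool list) set" where
  "file_tuples Ns F = {W. (\<forall>n\<in>Ns. length (W n) = F) \<and> (\<forall>n. n \<notin> Ns \<longrightarrow> W n = [])}"

definition demands :: "nat set \<Rightarrow> nat \<Rightarrow> (nat \<Rightarrow> nat) set" where
  "demands Ns K = {0..<K} \<rightarrow>\<^sub>E Ns"

text \<open>A scheme with file size F bits consists of
  placement functions phi k (cache content of user k, a function of the files),
  message lengths L d, encoding functions psi d (message for demand d, a function of the files),
  and decoders mu d k (user k's estimate of its requested file from the message and its cache).\<close>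
definition valid_scheme ::
  "real \<Rightarrow> nat set \<Rightarrow> nat \<Rightarrow> nat \<Rightarrow>
   (nat \<Rightarrow> (nat \<Rightarrow> bool list) \<Rightarrow> bool list) \<Rightarrow>
   ((nat \<Rightarrow> nat) \<Rightarrow> nat) \<Rightarrow>
   ((nat \<Rightarrow> nat) \<Rightarrow> (nat \<Rightarrow> bool list) \<Rightarrow> bool list) \<Rightarrow> bool" where
  "valid_scheme M Ns K F phi L psi \<longleftrightarrow>
     (\<forall>k<K. \<forall>W\<in>file_tuples Ns F. real (length (phi k W)) \<le> M * real F) \<and>
     (\<forall>d\<in>demands Ns K. \<forall>W\<in>file_tuples Ns F. length (psi d W) = L d)"

definition err_prob ::
  "nat set \<Rightarrow> nat \<Rightarrow>
   (nat \<Rightarrow> (nat \<Rightarrow> bool list) \<Rightarrow> bool list) \<Rightarrow>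
   ((nat \<Rightarrow> nat) \<Rightarrow> (nat \<Rightarrow> bool list) \<Rightarrow> bool list) \<Rightarrow>
   ((nat \<Rightarrow> nat) \<Rightarrow> nat \<Rightarrow> bool list \<Rightarrow> bool list \<Rightarrow> bool list) \<Rightarrow>
   (nat \<Rightarrow> nat) \<Rightarrow> nat \<Rightarrow> real" where
  "err_prob Ns F phi psi mu d k =
     real (card {W\<in>file_tuples Ns F. mu d k (psi d W) (phi k W) \<noteq> W (d k)})
     / real (card (file_tuples Ns F))"

text \<open>Expected rate when the K demands are i.i.d. uniform over Ns.\<close>
definition expected_rate :: "nat set \<Rightarrow> nat \<Rightarrow> nat \<Rightarrow> ((nat \<Rightarrow> nat) \<Rightarrow> nat) \<Rightarrow> real" where
  "expected_rate Ns K F L =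
     (\<Sum>d\<in>demands Ns K. real (L d) / real F) / real (card (demands Ns K))"

definition achievable_exp_rate :: "real \<Rightarrow> nat set \<Rightarrow> nat \<Rightarrow> real \<Rightarrow> bool" where
  "achievable_exp_rate M Ns K r \<longleftrightarrow>
     (\<forall>\<epsilon>>0. \<exists>F0. \<forall>F\<ge>F0. \<exists>phi L psi mu.
        valid_scheme M Ns K F phi L psi \<and>
        (\<forall>d\<in>demands Ns K. \<forall>k<K. err_prob Ns F phi psi mu d k \<le> \<epsilon>) \<and>
        expected_rate Ns K F L \<le> r)"

definition Rbar :: "real \<Rightarrow> nat set \<Rightarrow> nat \<Rightarrow> real" where
  "Rbar M Ns K = Inf {r. achievable_exp_rate M Ns K r}"

definition Rfun :: "real \<Rightarrow> nat \<Rightarrow> nat \<Rightarrow> real" where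
  "Rfun M N K =
     (if M = 0 then min (real N) (real K)
      else if 0 < M \<and> M \<le> real N then
        (1 - M / real N) * min (real N / M * (1 - (1 - M / real N) ^ K)) (real N)
      else 0)"

end

theory Submission
  imports Defs
begin

(*
  Fix t demand vectors and the first s users, and let U be the set of files
  they request. A union bound over the st decoding events shows that at least half of the
  2^(N F) file tuples are decoded correctly for all of them; such a tuple is determined by the
  t messages, the s caches and the N - |U| unrequested files, whence
  |U| F <= (sum of the t message lengths) + s (M F + 1) + 1.
  For independent uniform demand vectors E|U| = N (1 - (1 - 1/N)^(st)) >= st/2 when st <= N,
  so the expected rate is at least s/2 - s M / t up to O(1/F). Taking t ~ 4M and
  s = min(K, N/t) gives s/4 >= R/72. When N <= 72 or N <= 72 M, a single user running through
  all N files gives the bound 1 - M/N >= R/72 instead.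
*)

lemma card_bool_lists: "card {xs :: bool list. length xs = n} = 2 ^ n"
  using card_lists_length_eq[of "UNIV :: bool set" n] by simp

lemma card_bool_lists_le: "card {xs :: bool list. length xs \<le> n} < 2 ^ (n + 1)"
proof -
  have "card {xs :: bool list. length xs \<le> n} = (\<Sum>i<n + 1. 2 ^ i)"
    using card_lists_length_le[of "UNIV :: bool set" n] by (simp add: lessThan_Suc_atMost)
  also have "\<dots> < 2 ^ (n + 1)"
    by (induction n) simp_all
  finally show ?thesis .
qed

lemma finite_bool_lists: "finite {xs :: bool list. length xs = n}"
  using finite_lists_length_eq[of "UNIV :: bool set" n] by simp

lemma finite_bool_lists_le: "finite {xs :: bool list. length xs \<le> n}"
  using finite_lists_length_le[of "UNIV :: bool set" n] by simp

lemma card_file_tuples: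
  assumes "finite Ns"
  shows "card (file_tuples Ns F) = 2 ^ (card Ns * F)"
proof -
  have "bij_betw (\<lambda>W. restrict W Ns) (file_tuples Ns F) (Ns \<rightarrow>\<^sub>E {xs. length xs = F})"
    by (rule bij_betw_byWitness[where f' = "\<lambda>f n. if n \<in> Ns then f n else []"])
       (auto simp: file_tuples_def fun_eq_iff PiE_def extensional_def)
  then have "card (file_tuples Ns F) = (2 ^ F) ^ card Ns"
    using assms by (simp add: bij_betw_same_card card_PiE card_bool_lists)
  then show ?thesis
    by (simp add: power_mult mult.commute)
qed

lemma finite_file_tuples: "finite Ns \<Longrightarrow> finite (file_tuples Ns F)"
  using card_file_tuples[of Ns F] card.infinite by fastforce

section \<open>The cut-set bound\<close>

lemma card_le_twice_card_Diff_UN: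
  fixes \<epsilon> :: real
  assumes "finite A" "finite P"
    and "\<And>p. p \<in> P \<Longrightarrow> real (card (A \<inter> B p)) \<le> \<epsilon> * real (card A)"
    and "2 * real (card P) * \<epsilon> \<le> 1"
  shows "card A \<le> 2 * card (A - (\<Union>p\<in>P. B p))"
proof -
  have "card (A \<inter> (\<Union>p\<in>P. B p)) \<le> (\<Sum>p\<in>P. card (A \<inter> B p))"
    unfolding Int_UN_distrib using \<open>finite P\<close> by (rule card_UN_le)
  then have "real (card (A \<inter> (\<Union>p\<in>P. B p))) \<le> (\<Sum>p\<in>P. real (card (A \<inter> B p)))"
    by (simp flip: of_nat_sum)
  also have "\<dots> \<le> (\<Sum>p\<in>P. \<epsilon> * real (card A))"
    by (rule sum_mono) (rule assms(3))
  also have "\<dots> = (2 * real (card P) * \<epsilon>) * real (card A) / 2"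
    by simp
  also have "\<dots> \<le> 1 * real (card A) / 2"
    using assms(4) by (intro divide_right_mono mult_right_mono) auto
  finally have "2 * card (A \<inter> (\<Union>p\<in>P. B p)) \<le> card A"
    by linarith
  moreover have "card A = card (A - (\<Union>p\<in>P. B p)) + card (A \<inter> (\<Union>p\<in>P. B p))"
    using card_Int_Diff[OF \<open>finite A\<close>, of "\<Union>p\<in>P. B p"] by linarith
  ultimately show ?thesis
    by linarith
qed

definition requested_files :: "('i \<Rightarrow> nat \<Rightarrow> nat) \<Rightarrow> 'i set \<Rightarrow> nat set \<Rightarrow> nat set" where
  "requested_files g I S = {g i k | i k. i \<in> I \<and> k \<in> S}"

lemma correctly_decoded_eqI:
  assumes W: "W \<in> file_tuples Ns F" "W' \<in> file_tuples Ns F"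
    and decode: "\<And>i k. i \<in> I \<Longrightarrow> k \<in> S \<Longrightarrow> mu (g i) k (psi (g i) W) (phi k W) = W (g i k)"
      "\<And>i k. i \<in> I \<Longrightarrow> k \<in> S \<Longrightarrow> mu (g i) k (psi (g i) W') (phi k W') = W' (g i k)"
    and messages: "\<And>i. i \<in> I \<Longrightarrow> psi (g i) W = psi (g i) W'"
    and caches: "\<And>k. k \<in> S \<Longrightarrow> phi k W = phi k W'"
    and others: "\<And>n. n \<in> Ns - requested_files g I S \<Longrightarrow> W n = W' n"
  shows "W = W'"
proof
  fix n
  consider "n \<in> requested_files g I S" | "n \<in> Ns - requested_files g I S" | "n \<notin> Ns"
    by blast
  then show "W n = W' n"
  proof cases
    case 1
    then obtain i k where "i \<in> I" "k \<in> S" "n = g i k"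
      unfolding requested_files_def by blast
    then show ?thesis
      using decode messages caches by metis
  next
    case 2
    then show ?thesis by (rule others)
  next
    case 3
    then show ?thesis using W by (simp add: file_tuples_def)
  qed
qed

lemma card_correctly_decoded_le_product:
  assumes "finite I" "finite Ns" "valid_scheme M Ns K F phi L psi"
    and "\<And>i. i \<in> I \<Longrightarrow> g i \<in> demands Ns K" and "S \<subseteq> {0..<K}"
  shows "card {W \<in> file_tuples Ns F. \<forall>i\<in>I. \<forall>k\<in>S. mu (g i) k (psi (g i) W) (phi k W) = W (g i k)}
    \<le> card (PiE I (\<lambda>i. {xs :: bool list. length xs = L (g i)}))
      * card (S \<rightarrow>\<^sub>E {xs :: bool list. length xs \<le> nat \<lfloor>M * real F\<rfloor>})
      * card ((Ns - requested_files g I S) \<rightarrow>\<^sub>E {xs :: bool list. length xs = F})"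
    (is "card ?Good \<le> card ?A * card ?B * card ?C")
proof -
  define enc where "enc W = (restrict (\<lambda>i. psi (g i) W) I, restrict (\<lambda>k. phi k W) S,
      restrict W (Ns - requested_files g I S))" for W
  have "enc ` ?Good \<subseteq> ?A \<times> ?B \<times> ?C"
  proof (rule image_subsetI)
    fix W assume "W \<in> ?Good"
    then have "W \<in> file_tuples Ns F" by simp
    then have "\<forall>k\<in>S. real (length (phi k W)) \<le> M * real F"
      and "\<forall>i\<in>I. length (psi (g i) W) = L (g i)"
      using assms(3-5) unfolding valid_scheme_def by auto
    then show "enc W \<in> ?A \<times> ?B \<times> ?C"
      using \<open>W \<in> file_tuples Ns F\<close> by (auto simp: enc_def file_tuples_def le_nat_floor)
  qed
  moreover have "inj_on enc ?Good"
  proof (rule inj_onI)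
    fix W W' assume "W \<in> ?Good" "W' \<in> ?Good" "enc W = enc W'"
    then show "W = W'"
      by (intro correctly_decoded_eqI[of W Ns F W' I S mu g psi phi])
         (auto simp: enc_def restrict_def fun_eq_iff, meson+)
  qed
  moreover have "finite (?A \<times> ?B \<times> ?C)"
    using assms(1,2,5) finite_subset[OF assms(5)]
    by (intro finite_cartesian_product finite_PiE finite_Diff finite_bool_lists finite_bool_lists_le) auto
  ultimately have "card ?Good \<le> card (?A \<times> ?B \<times> ?C)"
    by (intro card_inj_on_le)
  then show ?thesis
    by (simp add: card_cartesian_product)
qed

lemma card_correctly_decoded_le:
  assumes "finite I" "finite Ns" "valid_scheme M Ns K F phi L psi"
    and "\<And>i. i \<in> I \<Longrightarrow> g i \<in> demands Ns K" and "S \<subseteq> {0..<K}"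
  shows "card {W \<in> file_tuples Ns F. \<forall>i\<in>I. \<forall>k\<in>S. mu (g i) k (psi (g i) W) (phi k W) = W (g i k)}
    \<le> 2 ^ ((\<Sum>i\<in>I. L (g i)) + (nat \<lfloor>M * real F\<rfloor> + 1) * card S
           + F * card (Ns - requested_files g I S))"
proof -
  define c where "c = nat \<lfloor>M * real F\<rfloor>"
  define U where "U = requested_files g I S"
  have "card (PiE I (\<lambda>i. {xs :: bool list. length xs = L (g i)})) = 2 ^ (\<Sum>i\<in>I. L (g i))"
    using assms(1) by (simp add: card_PiE card_bool_lists power_sum)
  moreover have "card (S \<rightarrow>\<^sub>E {xs :: bool list. length xs \<le> c}) \<le> (2 ^ (c + 1)) ^ card S"
    using finite_subset[OF assms(5)] card_bool_lists_le[of c]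
    by (simp add: card_PiE power_mono less_imp_le del: power_Suc)
  moreover have "card ((Ns - U) \<rightarrow>\<^sub>E {xs :: bool list. length xs = F}) = 2 ^ (F * card (Ns - U))"
    using assms(2) by (simp add: card_PiE card_bool_lists power_mult)
  ultimately have "card (PiE I (\<lambda>i. {xs :: bool list. length xs = L (g i)}))
      * card (S \<rightarrow>\<^sub>E {xs :: bool list. length xs \<le> c})
      * card ((Ns - U) \<rightarrow>\<^sub>E {xs :: bool list. length xs = F})
    \<le> 2 ^ (\<Sum>i\<in>I. L (g i)) * (2 ^ (c + 1)) ^ card S * 2 ^ (F * card (Ns - U))"
    by (simp add: mult_le_mono)
  also have "\<dots> = 2 ^ ((\<Sum>i\<in>I. L (g i)) + (c + 1) * card S + F * card (Ns - U))"
    by (simp add: power_add power_mult)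
  finally show ?thesis
    using card_correctly_decoded_le_product[OF assms, where mu = mu]
    unfolding c_def U_def by (rule order.trans[rotated])
qed

lemma card_file_tuples_le_twice_correctly_decoded:
  fixes \<epsilon> :: real
  assumes "finite I" "finite Ns" "finite S"
    and err: "\<And>i k. i \<in> I \<Longrightarrow> k \<in> S \<Longrightarrow> err_prob Ns F phi psi mu (g i) k \<le> \<epsilon>"
    and "2 * real (card I) * real (card S) * \<epsilon> \<le> 1"
  shows "card (file_tuples Ns F)
    \<le> 2 * card {W \<in> file_tuples Ns F. \<forall>i\<in>I. \<forall>k\<in>S. mu (g i) k (psi (g i) W) (phi k W) = W (g i k)}"
proof -
  define wrong where "wrong = (\<lambda>(i, k). {W. mu (g i) k (psi (g i) W) (phi k W) \<noteq> W (g i k)})"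
  have "card (file_tuples Ns F) \<le> 2 * card (file_tuples Ns F - (\<Union>p\<in>I \<times> S. wrong p))"
  proof (rule card_le_twice_card_Diff_UN)
    show "finite (file_tuples Ns F)" "finite (I \<times> S)"
      using assms(1-3) by (simp_all add: finite_file_tuples)
    show "2 * real (card (I \<times> S)) * \<epsilon> \<le> 1"
      using assms(5) by (simp add: card_cartesian_product)
    fix p assume "p \<in> I \<times> S"
    then obtain i k where "p = (i, k)" "i \<in> I" "k \<in> S" by blast
    then show "real (card (file_tuples Ns F \<inter> wrong p)) \<le> \<epsilon> * real (card (file_tuples Ns F))"
      using err[of i k] card_file_tuples[OF assms(2), of F]
      by (simp add: err_prob_def wrong_def Int_def conj_commute divide_le_eq)
  qed
  also have "file_tuples Ns F - (\<Union>p\<in>I \<times> S. wrong p)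
      = {W \<in> file_tuples Ns F. \<forall>i\<in>I. \<forall>k\<in>S. mu (g i) k (psi (g i) W) (phi k W) = W (g i k)}"
    by (auto simp: wrong_def)
  finally show ?thesis .
qed

lemma cut_set_bound:
  fixes \<epsilon> :: real
  assumes "finite I" "finite Ns" "0 \<le> M" "valid_scheme M Ns K F phi L psi"
    and "\<And>i. i \<in> I \<Longrightarrow> g i \<in> demands Ns K" and "S \<subseteq> {0..<K}"
    and "\<And>i k. i \<in> I \<Longrightarrow> k \<in> S \<Longrightarrow> err_prob Ns F phi psi mu (g i) k \<le> \<epsilon>"
    and "2 * real (card I) * real (card S) * \<epsilon> \<le> 1"
  shows "real (card (requested_files g I S)) * real F
    \<le> (\<Sum>i\<in>I. real (L (g i))) + (M * real F + 1) * real (card S) + 1"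
proof -
  define U where "U = requested_files g I S"
  define c where "c = nat \<lfloor>M * real F\<rfloor>"
  have "card (file_tuples Ns F)
      \<le> 2 * card {W \<in> file_tuples Ns F. \<forall>i\<in>I. \<forall>k\<in>S. mu (g i) k (psi (g i) W) (phi k W) = W (g i k)}"
    using assms(1,2) finite_subset[OF assms(6) finite_atLeastLessThan] assms(7,8)
    by (rule card_file_tuples_le_twice_correctly_decoded)
  also have "\<dots> \<le> 2 * 2 ^ ((\<Sum>i\<in>I. L (g i)) + (c + 1) * card S + F * card (Ns - U))"
    unfolding c_def U_def using card_correctly_decoded_le[OF assms(1,2,4-6), where mu = mu] by simp
  finally have "(2::nat) ^ (card Ns * F) \<le> 2 ^ Suc ((\<Sum>i\<in>I. L (g i)) + (c + 1) * card S + F * card (Ns - U))"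
    using card_file_tuples[OF assms(2), of F] by simp
  then have "card Ns * F \<le> (\<Sum>i\<in>I. L (g i)) + (c + 1) * card S + F * card (Ns - U) + 1"
    by (simp only: power_increasing_iff one_less_numeral_iff semiring_norm(76) Suc_eq_plus1)
  moreover have "U \<subseteq> Ns"
    using assms(5,6) by (force simp: U_def requested_files_def demands_def)
  then have "F * card (Ns - U) = card Ns * F - card U * F" "card U * F \<le> card Ns * F"
    using \<open>finite Ns\<close>
    by (simp_all add: card_Diff_subset finite_subset card_mono diff_mult_distrib2 mult.commute)
  ultimately have "card U * F \<le> (\<Sum>i\<in>I. L (g i)) + (c + 1) * card S + 1"
    by linarith
  then have "real (card U * F) \<le> real ((\<Sum>i\<in>I. L (g i)) + (c + 1) * card S + 1)"
    by (simp only: of_nat_le_iff)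
  then have "real (card U) * real F \<le> (\<Sum>i\<in>I. real (L (g i))) + (real c + 1) * real (card S) + 1"
    by (simp add: of_nat_sum algebra_simps)
  moreover have "(real c + 1) * real (card S) \<le> (M * real F + 1) * real (card S)"
    using \<open>0 \<le> M\<close> by (intro mult_right_mono) (simp_all add: c_def)
  ultimately show ?thesis
    unfolding U_def by linarith
qed

section \<open>Lower bounds on the expected rate\<close>

lemma expected_rate_ge_of_sum:
  assumes "finite Ns" "Ns \<noteq> {}" "0 < F" "0 < w"
    and "real (card (demands Ns K)) * (a * real F - b) \<le> w * (\<Sum>d\<in>demands Ns K. real (L d))"
  shows "a / w - b / w / real F \<le> expected_rate Ns K F L"
proof -
  define D where "D = real (card (demands Ns K))"
  have "0 < D"
    using assms(1,2) by (simp add: D_def demands_def card_PiE card_gt_0_iff)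
  have "a / w - b / w / real F = D * (a * real F - b) / (w * (real F * D))"
    using \<open>0 < D\<close> assms(3,4) by (simp add: field_simps)
  also have "\<dots> \<le> w * (\<Sum>d\<in>demands Ns K. real (L d)) / (w * (real F * D))"
    using assms(3-5) \<open>0 < D\<close> by (intro divide_right_mono) (simp_all add: D_def)
  also have "\<dots> = expected_rate Ns K F L"
    using assms(4) by (simp add: expected_rate_def D_def sum_divide_distrib[symmetric])
  finally show ?thesis .
qed

lemma achievable_exp_rate_ge:
  fixes a b \<epsilon> :: real
  assumes "achievable_exp_rate M Ns K r" "0 < \<epsilon>"
    and bound: "\<And>F phi L psi mu. 0 < F \<Longrightarrow> valid_scheme M Ns K F phi L psi \<Longrightarrow>
      \<forall>d\<in>demands Ns K. \<forall>k<K. err_prob Ns F phi psi mu d k \<le> \<epsilon> \<Longrightarrow>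
      a - b / real F \<le> expected_rate Ns K F L"
  shows "a \<le> r"
proof -
  obtain F0 where F0: "\<forall>F\<ge>F0. \<exists>phi L psi mu. valid_scheme M Ns K F phi L psi \<and>
      (\<forall>d\<in>demands Ns K. \<forall>k<K. err_prob Ns F phi psi mu d k \<le> \<epsilon>) \<and> expected_rate Ns K F L \<le> r"
    using assms(1,2) unfolding achievable_exp_rate_def by blast
  have "eventually (\<lambda>F. a - b / real F \<le> r) sequentially"
  proof (rule eventually_sequentiallyI[of "max F0 1"])
    fix F assume "max F0 1 \<le> F"
    then obtain phi L psi mu where scheme: "valid_scheme M Ns K F phi L psi"
      and err: "\<forall>d\<in>demands Ns K. \<forall>k<K. err_prob Ns F phi psi mu d k \<le> \<epsilon>"
      and rate: "expected_rate Ns K F L \<le> r"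
      using F0 by auto
    have "0 < F"
      using \<open>max F0 1 \<le> F\<close> by simp
    from bound[OF this scheme err] rate show "a - b / real F \<le> r"
      by (rule order.trans)
  qed
  moreover have "(\<lambda>F. a - b / real F) \<longlonglongrightarrow> a"
    using tendsto_diff[OF tendsto_const lim_const_over_n[of b]] by simp
  ultimately show ?thesis
    using tendsto_upperbound trivial_limit_sequentially by blast
qed

lemma achievable_exp_rate_nonneg:
  assumes "achievable_exp_rate M Ns K r"
  shows "0 \<le> r"
proof -
  obtain F L where "expected_rate Ns K F L \<le> r"
    using assms zero_less_one unfolding achievable_exp_rate_def by blast
  moreover have "0 \<le> expected_rate Ns K F L"
    by (simp add: expected_rate_def sum_nonneg)
  ultimately show ?thesis
    by linarith
qed

lemma sum_demands_fun_upd: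
  fixes f :: "(nat \<Rightarrow> nat) \<Rightarrow> 'a::semiring_1"
  assumes "k < K"
  shows "(\<Sum>d\<in>demands Ns K. \<Sum>n\<in>Ns. f (d(k := n))) = of_nat (card Ns) * (\<Sum>d\<in>demands Ns K. f d)"
proof -
  define D where "D = demands Ns K"
  define swap :: "(nat \<Rightarrow> nat) \<times> nat \<Rightarrow> (nat \<Rightarrow> nat) \<times> nat"
    where "swap = (\<lambda>(d, n). (d(k := n), d k))"
  have "bij_betw swap (D \<times> Ns) (D \<times> Ns)"
    by (rule bij_betw_byWitness[where f' = swap])
       (use assms in \<open>auto simp: swap_def D_def demands_def PiE_iff extensional_def\<close>)
  have "(\<Sum>d\<in>D. \<Sum>n\<in>Ns. f (d(k := n))) = (\<Sum>p\<in>D \<times> Ns. f (fst (swap p)))"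
    by (simp add: swap_def sum.cartesian_product case_prod_beta)
  also have "\<dots> = (\<Sum>p\<in>D \<times> Ns. f (fst p))"
    using \<open>bij_betw swap (D \<times> Ns) (D \<times> Ns)\<close> by (rule sum.reindex_bij_betw)
  also have "\<dots> = (\<Sum>d\<in>D. \<Sum>n\<in>Ns. f d)"
    by (simp only: sum.cartesian_product split_def)
  finally show ?thesis
    by (simp add: D_def sum_distrib_left)
qed

lemma sum_PiE_sum_coordinates:
  fixes f :: "'b \<Rightarrow> 'c::comm_semiring_1"
  assumes "finite A" "finite D"
  shows "(\<Sum>\<tau>\<in>A \<rightarrow>\<^sub>E D. \<Sum>i\<in>A. f (\<tau> i)) = of_nat (card A * card D ^ (card A - 1)) * (\<Sum>d\<in>D. f d)"
proof -
  have "(\<Sum>\<tau>\<in>A \<rightarrow>\<^sub>E D. f (\<tau> i)) = of_nat (card D ^ (card A - 1)) * (\<Sum>d\<in>D. f d)" if "i \<in> A" for i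
  proof -
    have "(\<Sum>\<tau>\<in>A \<rightarrow>\<^sub>E D. f (\<tau> i)) = (\<Sum>\<tau>\<in>A \<rightarrow>\<^sub>E D. \<Prod>x\<in>A. if x = i then f (\<tau> x) else 1)"
      using assms(1) that by (simp add: prod.delta)
    also have "\<dots> = (\<Prod>x\<in>A. \<Sum>d\<in>D. if x = i then f d else 1)"
      using assms by (rule prod_sum_PiE[symmetric])
    also have "\<dots> = (\<Prod>x\<in>A. if x = i then (\<Sum>d\<in>D. f d) else of_nat (card D))"
      by (rule prod.cong) simp_all
    finally show ?thesis
      using assms(1) that by (simp add: prod_gen_delta mult.commute)
  qed
  then have "(\<Sum>i\<in>A. \<Sum>\<tau>\<in>A \<rightarrow>\<^sub>E D. f (\<tau> i)) = (\<Sum>i\<in>A. of_nat (card D ^ (card A - 1)) * (\<Sum>d\<in>D. f d))"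
    by (rule sum.cong[OF refl])
  then show ?thesis
    by (simp add: sum.swap[of _ "A \<rightarrow>\<^sub>E D"] mult.assoc)
qed

lemma achievable_exp_rate_ge_single_user:
  assumes "achievable_exp_rate M Ns K r" "finite Ns" "Ns \<noteq> {}" "0 < K" "0 \<le> M"
  shows "1 - M / real (card Ns) \<le> r"
proof -
  define N where "N = real (card Ns)"
  have "0 < N"
    using assms(2,3) by (simp add: N_def card_gt_0_iff)
  have "(N - M) / N \<le> r"
  proof (rule achievable_exp_rate_ge[where \<epsilon> = "1 / (2 * N)" and b = "2 / N"])
    show "achievable_exp_rate M Ns K r" "0 < 1 / (2 * N)"
      using assms(1) \<open>0 < N\<close> by simp_all
    fix F phi L psi mu
    assume "0 < F" and scheme: "valid_scheme M Ns K F phi L psi"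
      and err: "\<forall>d\<in>demands Ns K. \<forall>k<K. err_prob Ns F phi psi mu d k \<le> 1 / (2 * N)"
    have per_demand: "N * real F \<le> (\<Sum>n\<in>Ns. real (L (d(0 := n)))) + (M * real F + 2)"
      if "d \<in> demands Ns K" for d
    proof -
      have updated: "d(0 := n) \<in> demands Ns K" if "n \<in> Ns" for n
        using \<open>d \<in> demands Ns K\<close> that assms(4) by (auto simp: demands_def PiE_iff extensional_def)
      have "requested_files (\<lambda>n. d(0 := n)) Ns {0} = Ns"
        by (auto simp: requested_files_def)
      moreover have "real (card (requested_files (\<lambda>n. d(0 := n)) Ns {0})) * real F
          \<le> (\<Sum>n\<in>Ns. real (L (d(0 := n)))) + (M * real F + 1) * real (card {0::nat}) + 1"
      proof (rule cut_set_bound[where \<epsilon> = "1 / (2 * N)" and mu = mu])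
        show "\<And>n k. n \<in> Ns \<Longrightarrow> k \<in> {0} \<Longrightarrow> err_prob Ns F phi psi mu (d(0 := n)) k \<le> 1 / (2 * N)"
          using err updated assms(4) by blast
      qed (use assms(2,4,5) scheme updated \<open>0 < N\<close> in \<open>simp_all add: N_def del: fun_upd_apply\<close>)
      ultimately show ?thesis
        by (simp add: N_def)
    qed
    have "real (card (demands Ns K)) * (N * real F) \<le> (\<Sum>d\<in>demands Ns K. \<Sum>n\<in>Ns. real (L (d(0 := n))))
        + real (card (demands Ns K)) * (M * real F + 2)"
      using sum_mono[OF per_demand] by (simp add: sum.distrib)
    also have "(\<Sum>d\<in>demands Ns K. \<Sum>n\<in>Ns. real (L (d(0 := n)))) = N * (\<Sum>d\<in>demands Ns K. real (L d))"
      unfolding N_def using assms(4) by (rule sum_demands_fun_upd)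
    finally have "real (card (demands Ns K)) * ((N - M) * real F - 2) \<le> N * (\<Sum>d\<in>demands Ns K. real (L d))"
      by (simp add: algebra_simps)
    with assms(2,3) \<open>0 < F\<close> \<open>0 < N\<close> show "(N - M) / N - 2 / N / real F \<le> expected_rate Ns K F L"
      by (rule expected_rate_ge_of_sum)
  qed
  then show ?thesis
    using \<open>0 < N\<close> by (simp add: N_def diff_divide_distrib)
qed

section \<open>Distinct requested files\<close>

lemma card_demands_avoiding:
  assumes "finite Ns" "n \<in> Ns" "s \<le> K"
  shows "card {d \<in> demands Ns K. \<forall>k<s. d k \<noteq> n} = (card Ns - 1) ^ s * card Ns ^ (K - s)"
proof -
  have "{d \<in> demands Ns K. \<forall>k<s. d k \<noteq> n} = PiE {0..<K} (\<lambda>k. if k < s then Ns - {n} else Ns)"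
    using assms(3) by (auto simp: demands_def PiE_iff extensional_def split: if_splits)
  then have "card {d \<in> demands Ns K. \<forall>k<s. d k \<noteq> n}
      = (\<Prod>k\<in>{0..<K}. if k < s then card Ns - 1 else card Ns)"
    using assms(1,2) by (simp add: card_PiE if_distrib cong: if_cong)
  also have "\<dots> = (\<Prod>k\<in>{..<s}. card Ns - 1) * (\<Prod>k\<in>{s..<K}. card Ns)"
  proof -
    have "{0..<K} \<inter> {k. k < s} = {..<s}" "{0..<K} \<inter> - {k. k < s} = {s..<K}"
      using assms(3) by auto
    then show ?thesis
      by (simp only: prod.If_cases finite_atLeastLessThan)
  qed
  finally show ?thesis
    by simp
qed

lemma sum_card_requested_files:
  assumes "finite Ns" "s \<le> K"
  shows "(\<Sum>\<tau>\<in>{0..<t} \<rightarrow>\<^sub>E demands Ns K. card (requested_files \<tau> {0..<t} {0..<s}))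
    = card Ns * ((card Ns ^ K) ^ t - ((card Ns - 1) ^ s * card Ns ^ (K - s)) ^ t)"
proof -
  define T where "T = {0..<t} \<rightarrow>\<^sub>E demands Ns K"
  define U where "U \<tau> = requested_files \<tau> {0..<t} {0..<s}" for \<tau> :: "nat \<Rightarrow> nat \<Rightarrow> nat"
  have finite_T: "finite T"
    using assms(1) by (simp add: T_def demands_def finite_PiE)
  have card_T: "card T = (card Ns ^ K) ^ t"
    by (simp add: T_def demands_def card_PiE)
  have "card (U \<tau>) = (\<Sum>n\<in>Ns. if n \<in> U \<tau> then 1 else 0)" if "\<tau> \<in> T" for \<tau>
  proof -
    have "U \<tau> = Ns \<inter> {n. n \<in> U \<tau>}"
      using that assms(2) by (auto simp: T_def U_def requested_files_def demands_def PiE_iff)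
    then show ?thesis
      using assms(1) by (simp add: sum.If_cases)
  qed
  then have "(\<Sum>\<tau>\<in>T. card (U \<tau>)) = (\<Sum>\<tau>\<in>T. \<Sum>n\<in>Ns. if n \<in> U \<tau> then 1 else 0)"
    by (rule sum.cong[OF refl])
  also have "\<dots> = (\<Sum>n\<in>Ns. \<Sum>\<tau>\<in>T. if n \<in> U \<tau> then 1 else 0)"
    by (rule sum.swap)
  also have "\<dots> = (\<Sum>n\<in>Ns. card T - ((card Ns - 1) ^ s * card Ns ^ (K - s)) ^ t)"
  proof (rule sum.cong[OF refl])
    fix n assume "n \<in> Ns"
    have avoiding: "{\<tau> \<in> T. n \<notin> U \<tau>} = {0..<t} \<rightarrow>\<^sub>E {d \<in> demands Ns K. \<forall>k<s. d k \<noteq> n}"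
      by (auto simp: T_def U_def requested_files_def PiE_iff extensional_def)
    have "(\<Sum>\<tau>\<in>T. if n \<in> U \<tau> then 1 else 0) = card (T - {\<tau> \<in> T. n \<notin> U \<tau>})"
    proof -
      have "T - {\<tau> \<in> T. n \<notin> U \<tau>} = T \<inter> {\<tau>. n \<in> U \<tau>}"
        by blast
      then show ?thesis
        using finite_T by (simp add: sum.If_cases)
    qed
    also have "\<dots> = card T - card {\<tau> \<in> T. n \<notin> U \<tau>}"
      using finite_T by (intro card_Diff_subset) auto
    finally show "(\<Sum>\<tau>\<in>T. if n \<in> U \<tau> then 1 else 0) = card T - ((card Ns - 1) ^ s * card Ns ^ (K - s)) ^ t"
      using assms \<open>n \<in> Ns\<close> by (simp add: avoiding card_PiE card_demands_avoiding)
  qed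
  finally show ?thesis
    unfolding card_T by (simp add: T_def U_def)
qed

lemma one_minus_power_le:
  fixes y :: real
  assumes "0 \<le> y" "y \<le> 1"
  shows "(1 - y) ^ n \<le> 1 - real n * y + (real n * y) ^ 2 / 2"
proof (induction n)
  case 0
  then show ?case by simp
next
  case (Suc n)
  have "(1 - y) ^ Suc n \<le> (1 - y) * (1 - real n * y + (real n * y) ^ 2 / 2)"
    using Suc assms by (simp add: mult_left_mono)
  also have "\<dots> \<le> 1 - real (Suc n) * y + (real (Suc n) * y) ^ 2 / 2"
  proof -
    have "0 \<le> y ^ 2 / 2 + (real n) ^ 2 * y ^ 3 / 2"
      using assms by simp
    then show ?thesis
      by (simp add: algebra_simps power2_eq_square power3_eq_cube)
  qed
  finally show ?case .
qed

lemma half_le_mult_one_minus_power: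
  assumes "0 < N" "x \<le> N"
  shows "real x / 2 \<le> real N * (1 - (1 - 1 / real N) ^ x)"
proof -
  have "real x * (real x / real N) \<le> real x * 1"
    using assms by (intro mult_left_mono) simp_all
  then have "real x / 2 \<le> real x - real x * (real x / real N) / 2"
    by (simp add: field_simps)
  also have "\<dots> = real N * (real x * (1 / real N) - (real x * (1 / real N)) ^ 2 / 2)"
    using assms(1) by (simp add: field_simps power2_eq_square)
  also have "\<dots> \<le> real N * (1 - (1 - 1 / real N) ^ x)"
    using one_minus_power_le[of "1 / real N" x] assms(1) by (intro mult_left_mono) simp_all
  finally show ?thesis .
qed

lemma sum_card_requested_files_ge:
  assumes "finite Ns" "s \<le> K" "s * t \<le> card Ns"
  shows "real (card ({0..<t} \<rightarrow>\<^sub>E demands Ns K)) * (real (s * t) / 2)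
    \<le> real (\<Sum>\<tau>\<in>{0..<t} \<rightarrow>\<^sub>E demands Ns K. card (requested_files \<tau> {0..<t} {0..<s}))"
proof (cases "s * t = 0")
  case False
  define N where "N = card Ns"
  define a where "a = (N ^ K) ^ t"
  define b where "b = ((N - 1) ^ s * N ^ (K - s)) ^ t"
  define q where "q = 1 - 1 / real N"
  have "0 < N"
    using False assms(3) by (simp add: N_def) (metis le_0_eq mult_is_0 not_gr0)
  have "real (N - 1) = q * real N"
    using \<open>0 < N\<close> by (simp add: q_def of_nat_diff field_simps)
  then have "real ((N - 1) ^ s * N ^ (K - s)) = q ^ s * real N ^ K"
    using assms(2) by (simp add: power_mult_distrib mult.assoc flip: power_add)
  then have b_eq: "real b = q ^ (s * t) * real a"
    unfolding a_def b_def of_nat_power[of _ t] by (simp add: power_mult power_mult_distrib)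
  have "b \<le> a"
    unfolding a_def b_def
  proof (rule power_mono)
    have "(N - 1) ^ s * N ^ (K - s) \<le> N ^ s * N ^ (K - s)"
      by (simp add: power_mono)
    also have "\<dots> = N ^ K"
      using assms(2) by (simp flip: power_add)
    finally show "(N - 1) ^ s * N ^ (K - s) \<le> N ^ K" .
  qed simp
  have "real (s * t) / 2 \<le> real N * (1 - q ^ (s * t))"
    using \<open>0 < N\<close> assms(3) unfolding q_def N_def by (rule half_le_mult_one_minus_power)
  then have "real a * (real (s * t) / 2) \<le> real a * (real N * (1 - q ^ (s * t)))"
    by (rule mult_left_mono) simp
  also have "\<dots> = real N * (real a - real b)"
    using b_eq by (simp add: algebra_simps)
  finally have "real a * (real (s * t) / 2) \<le> real N * (real a - real b)" .
  moreover have "card ({0..<t} \<rightarrow>\<^sub>E demands Ns K) = a"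
    by (simp add: a_def N_def demands_def card_PiE)
  ultimately show ?thesis
    unfolding sum_card_requested_files[OF assms(1,2)] N_def[symmetric] a_def[symmetric] b_def[symmetric]
    using \<open>b \<le> a\<close> by (simp add: of_nat_diff)
next
  case True
  then show ?thesis
    by (simp only: True)
qed

lemma sum_cut_set_bound:
  assumes "finite Ns" "0 \<le> M" "valid_scheme M Ns K F phi L psi" "s \<le> K"
    and err: "\<forall>d\<in>demands Ns K. \<forall>k<K. err_prob Ns F phi psi mu d k \<le> 1 / (2 * real t * real s)"
  shows "(\<Sum>\<tau>\<in>{0..<t} \<rightarrow>\<^sub>E demands Ns K. real (card (requested_files \<tau> {0..<t} {0..<s}))) * real F
    \<le> (\<Sum>\<tau>\<in>{0..<t} \<rightarrow>\<^sub>E demands Ns K. \<Sum>i\<in>{0..<t}. real (L (\<tau> i)))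
      + real (card ({0..<t} \<rightarrow>\<^sub>E demands Ns K)) * ((M * real F + 1) * real s + 1)"
proof -
  have "real (card (requested_files \<tau> {0..<t} {0..<s})) * real F
      \<le> (\<Sum>i\<in>{0..<t}. real (L (\<tau> i))) + ((M * real F + 1) * real s + 1)"
    if "\<tau> \<in> {0..<t} \<rightarrow>\<^sub>E demands Ns K" for \<tau>
  proof -
    have demands: "\<And>i. i \<in> {0..<t} \<Longrightarrow> \<tau> i \<in> demands Ns K"
      using that by auto
    have "real (card (requested_files \<tau> {0..<t} {0..<s})) * real F
        \<le> (\<Sum>i\<in>{0..<t}. real (L (\<tau> i))) + (M * real F + 1) * real (card {0..<s}) + 1"
    proof (rule cut_set_bound[where \<epsilon> = "1 / (2 * real t * real s)" and mu = mu])
      show "\<And>i k. i \<in> {0..<t} \<Longrightarrow> k \<in> {0..<s} \<Longrightarrow> err_prob Ns F phi psi mu (\<tau> i) k \<le> 1 / (2 * real t * real s)"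
        using err demands assms(4) by auto
      show "{0..<s} \<subseteq> {0..<K}"
        using assms(4) by auto
    qed (use assms(1-3) demands in simp_all)
    then show ?thesis
      by (simp add: add.assoc)
  qed
  then have "(\<Sum>\<tau>\<in>{0..<t} \<rightarrow>\<^sub>E demands Ns K. real (card (requested_files \<tau> {0..<t} {0..<s})) * real F)
      \<le> (\<Sum>\<tau>\<in>{0..<t} \<rightarrow>\<^sub>E demands Ns K. (\<Sum>i\<in>{0..<t}. real (L (\<tau> i))) + ((M * real F + 1) * real s + 1))"
    by (rule sum_mono)
  then show ?thesis
    by (simp add: sum_distrib_right sum.distrib)
qed

lemma achievable_exp_rate_ge_multi_user:
  assumes "achievable_exp_rate M Ns K r" "finite Ns" "0 \<le> M"
    and "1 \<le> s" "s \<le> K" "1 \<le> t" "s * t \<le> card Ns"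
  shows "real s / 2 - real s * M / real t \<le> r"
proof -
  define D where "D = demands Ns K"
  have "Ns \<noteq> {}"
    using assms(4,6,7) by (auto simp: Suc_le_eq)
  then have "finite D" "0 < card D"
    using assms(2) by (simp_all add: D_def demands_def card_PiE card_gt_0_iff finite_PiE)
  have "(real s * real t / 2 - real s * M) / real t \<le> r"
  proof (rule achievable_exp_rate_ge[where \<epsilon> = "1 / (2 * real t * real s)" and b = "(real s + 1) / real t"])
    show "achievable_exp_rate M Ns K r" "0 < 1 / (2 * real t * real s)"
      using assms(1,4,6) by simp_all
    fix F phi L psi mu
    assume "0 < F" and scheme: "valid_scheme M Ns K F phi L psi"
      and err: "\<forall>d\<in>demands Ns K. \<forall>k<K. err_prob Ns F phi psi mu d k \<le> 1 / (2 * real t * real s)"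
    define X where "X = (\<Sum>d\<in>D. real (L d))"
    define P where "P = real (card D ^ (t - 1))"
    have "real (card ({0..<t} \<rightarrow>\<^sub>E D)) * (real (s * t) / 2) * real F
        \<le> (\<Sum>\<tau>\<in>{0..<t} \<rightarrow>\<^sub>E D. real (card (requested_files \<tau> {0..<t} {0..<s}))) * real F"
      using mult_right_mono[OF sum_card_requested_files_ge[OF assms(2,5,7)], of "real F"]
      by (simp add: D_def)
    also have "\<dots> \<le> real t * P * X + real (card ({0..<t} \<rightarrow>\<^sub>E D)) * ((M * real F + 1) * real s + 1)"
      using sum_cut_set_bound[OF assms(2,3) scheme assms(5) err]
        sum_PiE_sum_coordinates[OF finite_atLeastLessThan \<open>finite D\<close>, where f = "\<lambda>d. real (L d)"]
      by (simp add: D_def X_def P_def)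
    also have "card ({0..<t} \<rightarrow>\<^sub>E D) = card D ^ (t - 1) * card D"
      using assms(6) by (simp add: card_PiE flip: power_Suc2)
    finally have "P * (real (card D) * (real (s * t) / 2) * real F)
        \<le> P * (real t * X + real (card D) * ((M * real F + 1) * real s + 1))"
      by (simp add: P_def algebra_simps)
    then have "real (card D) * (real (s * t) / 2) * real F
        \<le> real t * X + real (card D) * ((M * real F + 1) * real s + 1)"
      by (rule mult_left_le_imp_le) (simp add: P_def \<open>0 < card D\<close>)
    then have "real (card D) * ((real s * real t / 2 - real s * M) * real F - (real s + 1)) \<le> real t * X"
      by (simp add: algebra_simps)
    then show "(real s * real t / 2 - real s * M) / real t - (real s + 1) / real t / real F
        \<le> expected_rate Ns K F L"
      using assms(2,6) \<open>Ns \<noteq> {}\<close> \<open>0 < F\<close> unfolding D_def X_def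
      by (intro expected_rate_ge_of_sum) simp_all
  qed
  then show ?thesis
    using assms(6) by (simp add: field_simps)
qed

lemma Rfun_eq_0_if_N_le_M:
  assumes "0 < N" "real N \<le> M"
  shows "Rfun M N K = 0"
  using assms by (auto simp: Rfun_def)

lemma Rfun_le_min:
  assumes "0 < N" "0 \<le> M" "M \<le> real N"
  shows "Rfun M N K \<le> (1 - M / real N) * min (real K) (real N)"
proof (cases "M = 0")
  case False
  define x where "x = M / real N"
  have "0 < x" "x \<le> 1"
    using assms False by (simp_all add: x_def)
  have "1 - real K * x \<le> (1 - x) ^ K"
    using Bernoulli_inequality[of "- x" K] \<open>x \<le> 1\<close> by simp
  then have "real N / M * (1 - (1 - x) ^ K) \<le> real N / M * (real K * x)"
    using assms by (intro mult_left_mono) auto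
  also have "\<dots> = real K"
    using assms False by (simp add: x_def)
  finally have "min (real N / M * (1 - (1 - x) ^ K)) (real N) \<le> min (real K) (real N)"
    by simp
  then show ?thesis
    using assms False \<open>x \<le> 1\<close> by (simp add: Rfun_def mult_left_mono flip: x_def)
qed (simp add: Rfun_def min.commute)

lemma Rfun_le_div:
  assumes "0 < N" "0 < M" "M \<le> real N"
  shows "Rfun M N K \<le> (1 - M / real N) * (real N / M)"
proof -
  have "0 \<le> (1 - M / real N) ^ K" "M / real N \<le> 1"
    using assms by simp_all
  then have "real N / M * (1 - (1 - M / real N) ^ K) \<le> real N / M"
    using assms by (intro mult_left_le) simp_all
  then have "min (real N / M * (1 - (1 - M / real N) ^ K)) (real N) \<le> real N / M"
    by (rule min.coboundedI1)
  have "Rfun M N K = (1 - M / real N) * min (real N / M * (1 - (1 - M / real N) ^ K)) (real N)"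
    using assms by (simp add: Rfun_def)
  also have "\<dots> \<le> (1 - M / real N) * (real N / M)"
    using \<open>min _ _ \<le> real N / M\<close> by (rule mult_left_mono) (use \<open>M / real N \<le> 1\<close> in simp)
  finally show ?thesis .
qed

lemma Rfun_le_min_K_N:
  assumes "0 < N" "0 \<le> M" "M \<le> real N"
  shows "Rfun M N K \<le> min (real K) (real N)"
proof -
  have "Rfun M N K \<le> (1 - M / real N) * min (real K) (real N)"
    using assms by (rule Rfun_le_min)
  also have "\<dots> \<le> min (real K) (real N)"
    using assms by (intro mult_left_le_one_le) simp_all
  finally show ?thesis .
qed

lemma Rfun_le_N_div_M:
  assumes "0 < N" "0 < M" "M \<le> real N"
  shows "Rfun M N K \<le> real N / M"
proof -
  have "Rfun M N K \<le> (1 - M / real N) * (real N / M)"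
    using assms by (rule Rfun_le_div)
  also have "\<dots> \<le> real N / M"
    using assms by (intro mult_left_le_one_le) simp_all
  finally show ?thesis .
qed

lemma Rfun_le_72_mult_one_minus:
  assumes "0 < N" "0 \<le> M" "M < real N" "real N \<le> 72 \<or> real N \<le> 72 * M"
  shows "Rfun M N K \<le> 72 * (1 - M / real N)"
proof -
  have "0 \<le> 1 - M / real N"
    using assms(1,3) by simp
  consider "real N \<le> 72" | "0 < M" "real N / M \<le> 72"
    using assms(1,4) by (force simp: divide_le_eq)
  then have "Rfun M N K \<le> (1 - M / real N) * 72"
  proof cases
    case 1
    have "Rfun M N K \<le> (1 - M / real N) * min (real K) (real N)"
      using assms(1-3) by (intro Rfun_le_min) simp_all
    also have "\<dots> \<le> (1 - M / real N) * 72"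
      using 1 \<open>0 \<le> 1 - M / real N\<close> by (intro mult_left_mono) auto
    finally show ?thesis .
  next
    case 2
    have "Rfun M N K \<le> (1 - M / real N) * (real N / M)"
      using assms(1,3) 2(1) by (intro Rfun_le_div) simp_all
    also have "\<dots> \<le> (1 - M / real N) * 72"
      using 2(2) \<open>0 \<le> 1 - M / real N\<close> by (rule mult_left_mono)
    finally show ?thesis .
  qed
  then show ?thesis
    by (simp add: mult.commute)
qed

lemma real_div_minus_one_less:
  assumes "0 < t"
  shows "real n / real t - 1 < real (n div t)"
proof -
  have "real n = real (n div t) * real t + real (n mod t)"
    by (metis div_mult_mod_eq of_nat_add of_nat_mult)
  moreover have "real (n mod t) < real t"
    using assms by simp
  ultimately show ?thesis
    using assms by (simp add: field_simps)
qed

lemma cut_set_parameters: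
  fixes M :: real
  assumes "0 < K" "72 < N" "0 \<le> M" "72 * M < real N"
  obtains s t :: nat where "1 \<le> s" "s \<le> K" "1 \<le> t" "s * t \<le> N" "4 * M \<le> real t"
    and "min (real K) (real N) \<le> 18 * real s \<or> 0 < M \<and> real N / M \<le> 18 * real s"
proof (cases "M \<le> 1 / 4")
  case True
  show ?thesis
    by (rule that[of "min K N" 1]) (use assms True in auto)
next
  case False
  define t where "t = nat \<lceil>4 * M\<rceil>"
  define s where "s = min K (N div t)"
  have "4 * M \<le> real t" "real t < 4 * M + 1"
    using False by (simp_all add: t_def) linarith+
  then have "1 \<le> t" "t \<le> N"
    using False assms(4) by linarith+
  then have "1 \<le> s"
    using assms(1) by (simp add: s_def Suc_le_eq div_greater_zero_iff)
  moreover have "s * t \<le> N"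
    unfolding s_def by (meson div_times_less_eq_dividend le_trans min.cobounded2 mult_le_cancel2)
  moreover have "min (real K) (real N) \<le> 18 * real s \<or> 0 < M \<and> real N / M \<le> 18 * real s"
  proof (cases "s = K")
    case False
    then have "s = N div t"
      by (auto simp: s_def min_def split: if_splits)
    then have "real N / real t - 1 < real s"
      using \<open>1 \<le> t\<close> by (simp add: real_div_minus_one_less)
    moreover have "real N / (8 * M) \<le> real N / real t"
      using \<open>real t < 4 * M + 1\<close> \<open>1 \<le> t\<close> \<open>\<not> M \<le> 1 / 4\<close> by (intro divide_left_mono) auto
    moreover have "real N / M / 18 \<le> real N / (8 * M) - 1"
      using assms(4) \<open>\<not> M \<le> 1 / 4\<close> by (simp add: field_simps)
    ultimately show ?thesis
      using \<open>\<not> M \<le> 1 / 4\<close> by auto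
  qed (simp add: min.coboundedI1)
  moreover have "s \<le> K"
    by (simp add: s_def)
  ultimately show ?thesis
    using that \<open>1 \<le> t\<close> \<open>4 * M \<le> real t\<close> by blast
qed

section \<open>The uncoded scheme\<close>

lemma take_drop_concat:
  assumes "\<forall>x\<in>set xs. length x = F" "k < length xs"
  shows "take F (drop (k * F) (concat xs)) = xs ! k"
  using assms
proof (induction xs arbitrary: k)
  case (Cons x xs)
  then show ?case
    by (cases k) (simp_all add: add.commute)
qed simp

lemma achievable_exp_rate_uncoded:
  assumes "0 \<le> M"
  shows "achievable_exp_rate M Ns K (real K)"
  unfolding achievable_exp_rate_def
proof (intro allI impI exI[of _ 0])
  fix \<epsilon> :: real and F :: nat
  assume "0 < \<epsilon>"
  define psi :: "(nat \<Rightarrow> nat) \<Rightarrow> (nat \<Rightarrow> bool list) \<Rightarrow> bool list"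
    where "psi d W = concat (map (\<lambda>k. W (d k)) [0..<K])" for d W
  define mu :: "(nat \<Rightarrow> nat) \<Rightarrow> nat \<Rightarrow> bool list \<Rightarrow> bool list \<Rightarrow> bool list"
    where "mu d k m c = take F (drop (k * F) m)" for d k m c
  have lengths: "\<forall>x\<in>set (map (\<lambda>k. W (d k)) [0..<K]). length x = F"
    if "d \<in> demands Ns K" "W \<in> file_tuples Ns F" for d W
    using that by (auto simp: demands_def file_tuples_def PiE_iff)
  have "length (psi d W) = K * F" if "d \<in> demands Ns K" "W \<in> file_tuples Ns F" for d W
  proof -
    have "length (psi d W) = (\<Sum>k\<in>{0..<K}. length (W (d k)))"
      by (simp add: psi_def length_concat interv_sum_list_conv_sum_set_nat comp_def)
    also have "\<dots> = K * F"
      using lengths[OF that] by simp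
    finally show ?thesis .
  qed
  then have "valid_scheme M Ns K F (\<lambda>k W. []) (\<lambda>d. K * F) psi"
    using assms by (simp add: valid_scheme_def)
  moreover have "err_prob Ns F (\<lambda>k W. []) psi mu d k \<le> \<epsilon>" if "d \<in> demands Ns K" "k < K" for d k
  proof -
    have "mu d k (psi d W) [] = W (d k)" if "W \<in> file_tuples Ns F" for W
      using take_drop_concat[OF lengths[OF \<open>d \<in> demands Ns K\<close> that]] \<open>k < K\<close>
      by (simp add: psi_def mu_def)
    then have no_errors: "{W \<in> file_tuples Ns F. mu d k (psi d W) [] \<noteq> W (d k)} = {}"
      by blast
    show ?thesis
      unfolding err_prob_def no_errors using \<open>0 < \<epsilon>\<close> by simp
  qed
  moreover have "expected_rate Ns K F (\<lambda>d. K * F) \<le> real K"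
    by (cases "F = 0") (simp_all add: expected_rate_def)
  ultimately show "\<exists>phi L psi mu. valid_scheme M Ns K F phi L psi \<and>
      (\<forall>d\<in>demands Ns K. \<forall>k<K. err_prob Ns F phi psi mu d k \<le> \<epsilon>) \<and> expected_rate Ns K F L \<le> real K"
    by blast
qed

lemma achievable_exp_rate_ge_Rfun_many_files:
  assumes "achievable_exp_rate M {1..N} K r" "0 \<le> M" "0 < K" "72 < N" "72 * M < real N"
  shows "Rfun M N K \<le> 72 * r"
proof -
  obtain s t where "1 \<le> s" "s \<le> K" "1 \<le> t" "s * t \<le> N" "4 * M \<le> real t"
    and Rfun_bound: "min (real K) (real N) \<le> 18 * real s \<or> 0 < M \<and> real N / M \<le> 18 * real s"
    using cut_set_parameters[OF assms(3,4,2,5)] .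
  have "real s / 2 - real s * M / real t \<le> r"
    using achievable_exp_rate_ge_multi_user[OF assms(1) _ assms(2) \<open>1 \<le> s\<close> \<open>s \<le> K\<close> \<open>1 \<le> t\<close>]
      \<open>s * t \<le> N\<close> by simp
  moreover have "real s * (4 * M) \<le> real s * real t"
    using \<open>4 * M \<le> real t\<close> by (rule mult_left_mono) simp
  then have "real s * M / real t \<le> real s / 4"
    using \<open>1 \<le> t\<close> by (simp add: field_simps)
  moreover have "0 < N" "M \<le> real N"
    using assms(2,4,5) by simp_all
  then have "Rfun M N K \<le> min (real K) (real N)" "0 < M \<Longrightarrow> Rfun M N K \<le> real N / M"
    using Rfun_le_min_K_N[of N M K] Rfun_le_N_div_M[of N M K] assms(2) by blast+
  ultimately show ?thesis
    using Rfun_bound by linarith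
qed

lemma achievable_exp_rate_ge_Rfun:
  assumes "achievable_exp_rate M {1..N} K r" "0 \<le> M" "0 < N" "0 < K"
  shows "Rfun M N K \<le> 72 * r"
proof -
  consider (large_cache) "real N \<le> M"
    | (few_files) "M < real N" "real N \<le> 72 \<or> real N \<le> 72 * M"
    | (many_files) "72 < N" "72 * M < real N"
    by linarith
  then show ?thesis
  proof cases
    case large_cache
    then show ?thesis
      using assms(3) achievable_exp_rate_nonneg[OF assms(1)] by (simp add: Rfun_eq_0_if_N_le_M)
  next
    case few_files
    have "1 - M / real N \<le> r"
      using achievable_exp_rate_ge_single_user[OF assms(1)] assms(2-4) by simp
    then have "72 * (1 - M / real N) \<le> 72 * r"
      by simp
    then show ?thesis
      using Rfun_le_72_mult_one_minus[OF assms(3,2) few_files, of K] by (rule order.trans[rotated])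
  next
    case many_files
    then show ?thesis
      using achievable_exp_rate_ge_Rfun_many_files[OF assms(1,2,4)] by blast
  qed
qed

theorem claim1:
  fixes M :: real and N K :: nat
  assumes "M \<ge> 0" and "N > 0" and "K > 0"
  shows "Rfun M N K \<le> 72 * Rbar M {1..N} K"
proof -
  have "Rfun M N K / 72 \<le> Inf {r. achievable_exp_rate M {1..N} K r}"
    using achievable_exp_rate_uncoded[OF assms(1)] achievable_exp_rate_ge_Rfun[OF _ assms]
    by (intro cInf_greatest) fastforce+
  then show ?thesis
    by (simp add: Rbar_def)
qed

end
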